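(* Let $\alpha\in(0,1)$, $\gamma,\beta>0$, $r_0>0$, $Y=B(0,r_0)\subset\mathbb R\oplus\mathbb R^{d-1}$, and $\mathcal X(x)=\|x\|^\alpha Ax$ with $A=\gamma\,\mathrm{Id}_{\mathbb R}\oplus(-\beta\,\mathrm{Id}_{\mathbb R^{d-1}})$, with flow $\varphi_t$. There is $Q_0\in\mathbb R$ such that for every trajectory $x(t)$ of $\mathcal X$ entering $Y$ at time $0$ and leaving it at time $T_0$, every flow-invariant family $v(t)=D\varphi_t(x(0))v(0)$ with $\tan\rho(0)\le\alpha/2$, and every $t_1,t_2\in[0,T_0]$, $$\int_{t_1}^{t_2}\|x\|^\alpha\tan\rho\,dt\le Q_0,$$ where $\rho(t)$ is the angle between $v(t)$ and $\mathbb R\times\{0\}$.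
   Context: The condition $\tan\rho(0)\le\alpha/2$ expresses that $v(0)$ lies in the unstable cone $K^u$ used in this construction (the cone $\{\tan\rho\le\alpha/2\}$, which is forward invariant under the flow). *)

theory Defs
  imports "HOL-Analysis.Analysis"
begin

text \<open>Points of R (+) R^(d-1) are pairs (u, w) with u real and w :: real^'n, CARD('n) = d - 1.
  The norm on the product type is the Euclidean norm sqrt(u^2 + |w|^2).\<close>

definition VF :: "real \<Rightarrow> real \<Rightarrow> real \<Rightarrow> real \<times> (real^'n) \<Rightarrow> real \<times> (real^'n)" where
  "VF \<alpha> \<gamma> \<beta> x = (norm x powr \<alpha>) *\<^sub>R (\<gamma> * fst x, - \<beta> *\<^sub>R snd x)"

definition axis_angle :: "real \<times> (real^'n) \<Rightarrow> real" where
  "axis_angle v = arccos (\<bar>fst v\<bar> / norm v)"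

end

theory Submission
  imports Defs
begin

text \<open>Write \<open>x = (xu, xs)\<close> and \<open>v = (vu, vs)\<close> along \<open>\<real> \<oplus> \<real>\<^sup>d\<^sup>-\<^sup>1\<close>, so that
  \<open>tan \<rho> = |vs| / |vu|\<close>. Along the trajectory \<open>xu\<close> grows and \<open>xs\<close> decays at the rates
  \<open>\<gamma> |x|\<^sup>\<alpha>\<close> and \<open>\<beta> |x|\<^sup>\<alpha>\<close>; since the trajectory leaves the ball again, \<open>xu\<close> never
  vanishes. The cone \<open>tan \<rho> \<le> \<alpha>/2\<close> is forward invariant, so \<open>vu\<close> never vanishes either, and
  \<open>(tan\<^sup>2 \<rho>)' \<le> 2 |x|\<^sup>\<alpha> (-(\<beta> + \<gamma>) tan\<^sup>2 \<rho> + C m tan \<rho>)\<close>, where \<open>C = \<alpha> (\<beta> + \<gamma> \<alpha>\<^sup>2/4)\<close>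
  and \<open>m = |xu| |xs| / |x|\<^sup>2\<close> measures how far \<open>x\<close> is from both coordinate subspaces. The angle
  \<open>\<theta> = arctan (|xs| / |xu|)\<close> satisfies \<open>\<theta>' = -(\<beta> + \<gamma>) |x|\<^sup>\<alpha> m\<close>, so for
  \<open>L = (\<surd>(tan\<^sup>2 \<rho> + \<epsilon>\<^sup>2) + C \<theta> / (\<beta> + \<gamma>)) / (\<beta> + \<gamma>)\<close> we get
  \<open>L' \<le> -|x|\<^sup>\<alpha> tan \<rho> + |x|\<^sup>\<alpha> \<epsilon>\<close>. Integrating, the integral of \<open>|x|\<^sup>\<alpha> tan \<rho>\<close> is bounded by
  the oscillation of \<open>L\<close>, which depends only on \<open>\<alpha>, \<beta>, \<gamma>\<close>, plus an error that is small for
  small \<open>\<epsilon>\<close>.\<close>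

lemma has_real_derivative_nonneg_imp_mono_Icc:
  fixes g g' :: "real \<Rightarrow> real"
  assumes deriv: "\<forall>t\<in>{a..b}. (g has_real_derivative g' t) (at t within {a..b})"
    and nonneg: "\<forall>t\<in>{a..b}. 0 \<le> g' t"
    and "a \<le> s" "s \<le> t" "t \<le> b"
  shows "g s \<le> g t"
proof (rule DERIV_nonneg_imp_increasing_open[where f = g, OF \<open>s \<le> t\<close>])
  fix y assume "s < y" "y < t"
  then have "y \<in> {a..b}" and "at y within {a..b} = at y"
    using assms(3-5) by (auto intro: at_within_Icc_at)
  then show "\<exists>z. DERIV g y :> z \<and> 0 \<le> z"
    using deriv nonneg by metis
next
  have "continuous_on {a..b} g"
    using deriv by (meson DERIV_continuous continuous_on_eq_continuous_within)
  then show "continuous_on {s..t} g"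
    by (rule continuous_on_subset) (use assms(3-5) in auto)
qed

text \<open>Gronwall: \<open>exp (K t) g t\<close> is nondecreasing.\<close>

lemma positive_if_derivative_ge_linear:
  fixes g g' :: "real \<Rightarrow> real"
  assumes deriv: "\<forall>t\<in>{a..b}. (g has_real_derivative g' t) (at t within {a..b})"
    and lower: "\<forall>t\<in>{a..b}. - K * g t \<le> g' t"
    and "0 < g a" "t \<in> {a..b}"
  shows "0 < g t"
proof -
  define h where "h s = exp (K * s) * g s" for s
  have "h a \<le> h t"
  proof (rule has_real_derivative_nonneg_imp_mono_Icc
      [where g = h and g' = "\<lambda>s. exp (K * s) * (g' s + K * g s)"])
    show "\<forall>s\<in>{a..b}. (h has_real_derivative exp (K * s) * (g' s + K * g s)) (at s within {a..b})"
      unfolding h_def using deriv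
      by (auto intro!: derivative_eq_intros simp: algebra_simps)
  qed (use lower \<open>t \<in> {a..b}\<close> in auto)
  then have "0 < exp (K * t) * g t"
    using \<open>0 < g a\<close> unfolding h_def by (smt (verit) exp_gt_zero mult_pos_pos)
  then show ?thesis
    by (simp add: zero_less_mult_iff)
qed

lemma last_nonpos_point:
  fixes g :: "real \<Rightarrow> real"
  assumes cont: "continuous_on {a..t} g" and "g a \<le> 0" "0 < g t" "a \<le> t"
  obtains z where "a \<le> z" "z < t" "g z \<le> 0" "\<And>y. z < y \<Longrightarrow> y \<le> t \<Longrightarrow> 0 < g y"
proof -
  define S where "S = {s\<in>{a..t}. g s \<le> 0}"
  have "S = {a..t} \<inter> g -` {..0}"
    unfolding S_def by auto
  then have "closed S"
    using continuous_closed_preimage[OF cont] by simp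
  moreover have "a \<in> S" "bdd_above S"
    using assms unfolding S_def by (auto intro: bdd_aboveI[of _ t])
  ultimately have "Sup S \<in> S"
    using closed_contains_Sup by blast
  define z where "z = Sup S"
  have z: "a \<le> z" "z \<le> t" "g z \<le> 0"
    using \<open>Sup S \<in> S\<close> unfolding z_def S_def by auto
  show thesis
  proof (rule that[of z])
    show "z < t"
      using z \<open>0 < g t\<close> by (cases "z = t") auto
    show "0 < g y" if "z < y" "y \<le> t" for y
    proof (rule ccontr)
      assume "\<not> 0 < g y"
      then have "y \<in> S"
        using that z unfolding S_def by auto
      then have "y \<le> z"
        unfolding z_def using \<open>bdd_above S\<close> by (rule cSup_upper)
      then show False
        using that by simp
    qed
  qed (use z in auto)
qed

text \<open>If \<open>g' \<le> K g\<close> wherever \<open>g \<ge> 0\<close>, then \<open>exp (-K s) g s\<close> is nonincreasing on the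
  last stretch where \<open>g > 0\<close>, which starts at a point with \<open>g \<le> 0\<close>.\<close>

lemma nonpos_if_derivative_le_linear:
  fixes g g' :: "real \<Rightarrow> real"
  assumes deriv: "\<forall>t\<in>{a..b}. (g has_real_derivative g' t) (at t within {a..b})"
    and upper: "\<forall>t\<in>{a..b}. 0 \<le> g t \<longrightarrow> g' t \<le> K * g t"
    and "g a \<le> 0" and t: "t \<in> {a..b}"
  shows "g t \<le> 0"
proof (rule ccontr)
  assume "\<not> g t \<le> 0"
  then have gt: "0 < g t" by simp
  have "continuous_on {a..b} g"
    using deriv by (meson DERIV_continuous continuous_on_eq_continuous_within)
  then have cont: "continuous_on {a..t} g"
    by (rule continuous_on_subset) (use t in auto)
  obtain z where z: "a \<le> z" "z < t" "g z \<le> 0" and pos: "\<And>y. z < y \<Longrightarrow> y \<le> t \<Longrightarrow> 0 < g y"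
    using last_nonpos_point[OF cont \<open>g a \<le> 0\<close> gt] t by auto
  define h where "h s = - exp (- K * s) * g s" for s
  have "h z \<le> h t"
  proof (rule DERIV_nonneg_imp_increasing_open[where f = h])
    fix y assume y: "z < y" "y < t"
    then have "y \<in> {a..b}" and "at y within {a..b} = at y"
      using z t by (auto intro: at_within_Icc_at)
    then have "(g has_real_derivative g' y) (at y)" using deriv by metis
    then have "(h has_real_derivative exp (- K * y) * (K * g y - g' y)) (at y)"
      unfolding h_def by (auto intro!: derivative_eq_intros simp: algebra_simps)
    moreover have "g' y \<le> K * g y"
      using upper \<open>y \<in> {a..b}\<close> pos[of y] y by auto
    ultimately show "\<exists>l. DERIV h y :> l \<and> 0 \<le> l" by fastforce
  next
    show "continuous_on {z..t} h"
      unfolding h_def using z by (auto intro!: continuous_intros intro: continuous_on_subset[OF cont])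
  qed (use z in simp)
  moreover have "exp (- K * z) * g z \<le> 0" "0 < exp (- K * t) * g t"
    using z gt by (simp_all add: mult_nonneg_nonpos)
  ultimately show False
    unfolding h_def by simp
qed

lemma nonneg_linear_ode_zero_iff:
  fixes g c :: "real \<Rightarrow> real"
  assumes deriv: "\<forall>t\<in>{a..b}. (g has_real_derivative c t * g t) (at t within {a..b})"
    and bounded: "\<forall>t\<in>{a..b}. \<bar>c t\<bar> \<le> K"
    and nonneg: "\<forall>t\<in>{a..b}. 0 \<le> g t" and t: "t \<in> {a..b}"
  shows "g t = 0 \<longleftrightarrow> g a = 0"
proof
  assume "g t = 0"
  show "g a = 0"
  proof (rule ccontr)
    assume "g a \<noteq> 0"
    then have "0 < g a" using nonneg t by force
    have "0 < g t"
    proof (rule positive_if_derivative_ge_linear[OF deriv _ \<open>0 < g a\<close> t])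
      show "\<forall>s\<in>{a..b}. - K * g s \<le> c s * g s"
        using bounded nonneg by (metis abs_le_iff minus_le_iff mult_right_mono)
    qed
    then show False using \<open>g t = 0\<close> by simp
  qed
next
  assume "g a = 0"
  have "g t \<le> 0"
  proof (rule nonpos_if_derivative_le_linear[OF deriv _ _ t])
    show "\<forall>s\<in>{a..b}. 0 \<le> g s \<longrightarrow> c s * g s \<le> K * g s"
      using bounded by (auto intro!: mult_right_mono simp: abs_le_iff)
  qed (use \<open>g a = 0\<close> in simp)
  then show "g t = 0" using nonneg t by force
qed

lemma has_vector_derivative_fst:
  "(f has_vector_derivative f') F \<Longrightarrow> ((\<lambda>t. fst (f t)) has_real_derivative fst f') F"
  unfolding has_real_derivative_iff_has_vector_derivative has_vector_derivative_def
  by (drule has_derivative_fst) simp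

lemma has_vector_derivative_snd:
  "(f has_vector_derivative f') F \<Longrightarrow> ((\<lambda>t. snd (f t)) has_vector_derivative snd f') F"
  unfolding has_vector_derivative_def
  by (drule has_derivative_snd) simp

lemma has_vector_derivative_norm_power2:
  fixes f :: "real \<Rightarrow> 'a::real_inner"
  assumes "(f has_vector_derivative f') (at t within S)"
  shows "((\<lambda>s. (norm (f s))\<^sup>2) has_real_derivative 2 * inner (f t) f') (at t within S)"
proof -
  have "(f has_derivative (\<lambda>h. h *\<^sub>R f')) (at t within S)"
    using assms by (simp add: has_vector_derivative_def)
  from has_derivative_inner[OF this this]
  have "((\<lambda>s. inner (f s) (f s)) has_derivative (\<lambda>h. (2 * inner (f t) f') * h)) (at t within S)"
    by (simp add: inner_commute algebra_simps)
  then show ?thesis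
    by (simp add: has_field_derivative_def power2_norm_eq_inner)
qed

lemma DERIV_sqrt_comp:
  assumes "(f has_real_derivative D) (at t within S)" "0 < f t"
  shows "((\<lambda>s. sqrt (f s)) has_real_derivative D / (2 * sqrt (f t))) (at t within S)"
  using DERIV_chain2[OF DERIV_real_sqrt[OF assms(2)] assms(1)]
  by (simp add: field_simps)

lemma DERIV_arctan_sqrt_linear_decay:
  assumes deriv: "(r has_real_derivative - 2 * c * r t) (at t within S)" and pos: "0 < r t"
  shows "((\<lambda>s. arctan (sqrt (r s))) has_real_derivative - c * (sqrt (r t) / (1 + r t))) (at t within S)"
proof -
  define \<sigma> where "\<sigma> = sqrt (r t)"
  have \<sigma>: "0 < \<sigma>" "r t = \<sigma>\<^sup>2"
    unfolding \<sigma>_def using pos by simp_all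
  have "0 < 1 + \<sigma>\<^sup>2"
    by (simp add: add_pos_nonneg)
  moreover have half: "- 2 * c * \<sigma>\<^sup>2 / (2 * \<sigma>) = - c * \<sigma>"
    using \<sigma>(1) by (simp add: power2_eq_square)
  ultimately have "inverse (1 + \<sigma>\<^sup>2) * (- 2 * c * \<sigma>\<^sup>2 / (2 * \<sigma>)) = - c * (\<sigma> / (1 + \<sigma>\<^sup>2))"
    unfolding half by (simp add: field_simps)
  with DERIV_chain2[OF DERIV_arctan DERIV_sqrt_comp[OF deriv pos]]
  show ?thesis
    unfolding \<sigma>_def[symmetric] \<sigma>(2) using \<sigma>(1) by simp
qed

lemma has_derivative_norm_powr:
  fixes y :: "'a::real_inner"
  assumes "y \<noteq> 0"
  shows "((\<lambda>z. norm z powr \<alpha>) has_derivative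
           (\<lambda>h. \<alpha> * norm y powr \<alpha> / (norm y)\<^sup>2 * inner y h)) (at y)"
proof -
  have "((\<lambda>z. norm z powr \<alpha>) has_derivative
          (\<lambda>h. norm y powr \<alpha> * (0 * ln (norm y) + inner h (sgn y) * \<alpha> / norm y))) (at y)"
    using assms by (intro has_derivative_powr has_derivative_norm has_derivative_const) auto
  then show ?thesis
    using assms by (simp add: sgn_div_norm inner_commute power2_eq_square field_simps)
qed

lemma VF_has_derivative:
  fixes y :: "real \<times> (real^'n)"
  assumes "y \<noteq> 0"
  shows "(VF \<alpha> \<gamma> \<beta> has_derivative
           (\<lambda>h. (\<alpha> * norm y powr \<alpha> / (norm y)\<^sup>2 * inner y h) *\<^sub>R (\<gamma> * fst y, - \<beta> *\<^sub>R snd y)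
                + norm y powr \<alpha> *\<^sub>R (\<gamma> * fst h, - \<beta> *\<^sub>R snd h))) (at y)"
proof -
  have "((\<lambda>z::real \<times> (real^'n). (\<gamma> * fst z, - \<beta> *\<^sub>R snd z)) has_derivative
          (\<lambda>h. (\<gamma> * fst h, - \<beta> *\<^sub>R snd h))) (at y)"
    by (auto intro!: derivative_eq_intros)
  from has_derivative_scaleR[OF has_derivative_norm_powr[OF assms] this]
  show ?thesis
    unfolding VF_def[abs_def] by (simp add: add.commute)
qed

lemma tan_axis_angle:
  fixes v :: "real \<times> (real^'n)"
  assumes "fst v \<noteq> 0"
  shows "tan (axis_angle v) = norm (snd v) / \<bar>fst v\<bar>"
proof -
  define c where "c = \<bar>fst v\<bar> / norm v"
  have norm_v: "(norm v)\<^sup>2 = (fst v)\<^sup>2 + (norm (snd v))\<^sup>2"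
    by (cases v) (simp add: norm_Pair)
  have "0 < norm v" "\<bar>fst v\<bar> \<le> norm v"
    using assms norm_v abs_le_square_iff[of "fst v" "norm v"] by auto
  then have c: "0 < c" "c \<le> 1" and "1 - c\<^sup>2 = (norm (snd v) / norm v)\<^sup>2"
    using assms unfolding c_def power_divide by (simp_all add: field_simps norm_v)
  then have "tan (axis_angle v) = (norm (snd v) / norm v) / c"
    unfolding axis_angle_def c_def[symmetric] tan_def by (simp add: sin_arccos cos_arccos)
  then show ?thesis
    using \<open>0 < norm v\<close> unfolding c_def by simp
qed

lemma cross_term_bound:
  fixes U W A B q :: real
  assumes "0 \<le> W" "0 \<le> B" "\<bar>q\<bar> \<le> W * B"
  shows "2 * \<bar>U * A * q\<bar> \<le> \<bar>A\<bar> * B * (U\<^sup>2 + W\<^sup>2)"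
proof -
  have "\<bar>U * A * q\<bar> \<le> \<bar>U\<bar> * \<bar>A\<bar> * (W * B)"
    using assms by (simp add: abs_mult mult_left_mono)
  moreover have "2 * (\<bar>U\<bar> * W) \<le> U\<^sup>2 + W\<^sup>2"
    using sum_squares_bound[of "\<bar>U\<bar>" W] by (simp add: power2_abs)
  ultimately have "2 * \<bar>U * A * q\<bar> \<le> (\<bar>A\<bar> * B) * (2 * (\<bar>U\<bar> * W))"
    by (simp add: algebra_simps)
  also have "\<dots> \<le> (\<bar>A\<bar> * B) * (U\<^sup>2 + W\<^sup>2)"
    using \<open>2 * (\<bar>U\<bar> * W) \<le> U\<^sup>2 + W\<^sup>2\<close> assms by (intro mult_left_mono) auto
  finally show ?thesis .
qed

lemma cone_drift_bound:
  fixes \<alpha> \<gamma> \<beta> N U W A B q p :: real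
  assumes "0 < \<alpha>" "\<alpha> < 1" "0 < \<gamma>" "0 < \<beta>"
    and N: "0 < N" "N = U\<^sup>2 + W\<^sup>2" and p: "p = (U * A + q) / N"
    and "0 \<le> W" "0 \<le> B" "\<bar>q\<bar> \<le> W * B" and outside: "\<alpha>\<^sup>2 / 4 * A\<^sup>2 \<le> B\<^sup>2"
  shows "- \<beta> * (B\<^sup>2 + \<alpha> * p * q) - \<alpha>\<^sup>2 / 4 * \<gamma> * (A * (A + \<alpha> * U * p))
           \<le> \<alpha>\<^sup>2 / 4 * \<gamma> * (B\<^sup>2 - \<alpha>\<^sup>2 / 4 * A\<^sup>2)"
proof -
  define k where "k = \<alpha>\<^sup>2 / 4"
  have k: "0 < k" "k \<le> 1"
    using assms(1,2) power_le_one[of \<alpha> 2] unfolding k_def by auto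
  have c: "0 \<le> \<beta> + k * \<gamma>"
    using assms(3,4) k by simp
  have expand: "- \<beta> * (B\<^sup>2 + \<alpha> * p * q) - k * \<gamma> * (A * (A + \<alpha> * U * p))
      = - \<beta> * B\<^sup>2 - k * \<gamma> * A\<^sup>2 - \<alpha> * (\<beta> * q\<^sup>2 + k * \<gamma> * U\<^sup>2 * A\<^sup>2) / N
        + \<alpha> * (\<beta> + k * \<gamma>) * (- (U * A * q) / N)"
    unfolding p using N(1) by (simp add: field_simps power2_eq_square)
  have "- (U * A * q) \<le> \<bar>A\<bar> * B * N / 2"
    using cross_term_bound[of W B q U A] assms abs_ge_minus_self[of "U * A * q"]
    unfolding N(2) by linarith
  then have "- (U * A * q) / N \<le> \<bar>A\<bar> * B / 2"
    using N(1) by (simp add: divide_simps)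
  from mult_left_mono[OF this, of "\<alpha> * (\<beta> + k * \<gamma>)"]
  have cross: "\<alpha> * (\<beta> + k * \<gamma>) * (- (U * A * q) / N) \<le> (\<beta> + k * \<gamma>) * (\<alpha> * \<bar>A\<bar> * B) / 2"
    using assms(1) c by (simp add: mult_ac)
  have "(\<alpha> * \<bar>A\<bar>)\<^sup>2 \<le> (2 * B)\<^sup>2"
    using outside by (simp add: power_mult_distrib)
  then have "\<alpha> * \<bar>A\<bar> \<le> 2 * B"
    by (rule power2_le_imp_le) (use assms in simp)
  from mult_left_mono[OF mult_right_mono[OF this \<open>0 \<le> B\<close>] c]
  have cross': "(\<beta> + k * \<gamma>) * (\<alpha> * \<bar>A\<bar> * B) / 2 \<le> \<beta> * B\<^sup>2 + k * \<gamma> * B\<^sup>2"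
    by (simp add: power2_eq_square algebra_simps)
  have "0 \<le> \<alpha> * (\<beta> * q\<^sup>2 + k * \<gamma> * U\<^sup>2 * A\<^sup>2) / N"
    using assms(1,3,4) k N(1) by simp
  moreover have "k * \<gamma> * (k * A\<^sup>2) \<le> k * \<gamma> * A\<^sup>2"
    using mult_left_le_one_le[of "A\<^sup>2" k] k assms(3) by (simp add: mult_left_mono)
  moreover have "k * \<gamma> * (B\<^sup>2 - k * A\<^sup>2) = k * \<gamma> * B\<^sup>2 - k * \<gamma> * (k * A\<^sup>2)"
    by (simp add: algebra_simps)
  ultimately show ?thesis
    unfolding k_def[symmetric] expand using cross cross' by linarith
qed

lemma horizontal_drift_bound:
  fixes \<alpha> N U W A B q p :: real
  assumes "0 < \<alpha>" "\<alpha> < 1"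
    and N: "0 < N" "N = U\<^sup>2 + W\<^sup>2" and p: "p = (U * A + q) / N"
    and "0 \<le> W" "0 \<le> B" "\<bar>q\<bar> \<le> W * B" "B \<le> \<bar>A\<bar>"
  shows "- A\<^sup>2 \<le> A * (A + \<alpha> * U * p)"
proof -
  have "\<bar>A\<bar> * B \<le> \<bar>A\<bar> * \<bar>A\<bar>"
    by (rule mult_left_mono) (use assms in auto)
  also have "\<dots> = A\<^sup>2"
    by (simp add: power2_eq_square)
  finally have "\<bar>A\<bar> * B * N \<le> A\<^sup>2 * N"
    by (rule mult_right_mono) (use N(1) in simp)
  moreover have "2 * \<bar>U * A * q\<bar> \<le> \<bar>A\<bar> * B * N"
    using cross_term_bound[of W B q U A] assms unfolding N(2) by simp
  ultimately have "- (U * A * q) \<le> A\<^sup>2 / 2 * N"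
    using abs_ge_minus_self[of "U * A * q"] by linarith
  then have "- (A\<^sup>2 / 2) \<le> U * A * q / N"
    using N(1) by (simp add: field_simps)
  also have "\<dots> \<le> (U * A)\<^sup>2 / N + U * A * q / N"
    using N(1) by simp
  also have "\<dots> = U * A * p"
    unfolding p by (simp add: power2_eq_square add_divide_distrib[symmetric] algebra_simps)
  finally have y: "- (A\<^sup>2 / 2) \<le> U * A * p" .
  have "- (A\<^sup>2 / 2) \<le> \<alpha> * (- (A\<^sup>2 / 2))"
    using mult_left_le_one_le[of "A\<^sup>2 / 2" \<alpha>] assms(1,2) by simp
  also have "\<dots> \<le> \<alpha> * (U * A * p)"
    by (rule mult_left_mono[OF y]) (use assms(1) in simp)
  finally have "- (A\<^sup>2 / 2) \<le> \<alpha> * (U * A * p)" .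
  moreover have "A * (A + \<alpha> * U * p) = A\<^sup>2 + \<alpha> * (U * A * p)"
    by (simp add: algebra_simps power2_eq_square)
  moreover have "0 \<le> A\<^sup>2"
    by simp
  ultimately show ?thesis
    by linarith
qed

lemma drift_term_bound:
  fixes \<beta> \<gamma> U r W \<tau> :: real
  assumes "0 \<le> \<beta>" "0 \<le> \<gamma>" "0 \<le> \<tau>" "\<bar>r\<bar> \<le> W * \<tau>"
  shows "- ((U + r) * (\<beta> * r + \<gamma> * U * \<tau>\<^sup>2)) \<le> \<bar>U\<bar> * W * \<tau> * (\<beta> + \<gamma> * \<tau>\<^sup>2)"
proof -
  have "- ((U + r) * (\<beta> * r + \<gamma> * U * \<tau>\<^sup>2))
      = - (U * r) * (\<beta> + \<gamma> * \<tau>\<^sup>2) - (\<beta> * r\<^sup>2 + \<gamma> * U\<^sup>2 * \<tau>\<^sup>2)"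
    by (simp add: algebra_simps power2_eq_square)
  also have "\<dots> \<le> \<bar>U * r\<bar> * (\<beta> + \<gamma> * \<tau>\<^sup>2)"
  proof -
    have "- (U * r) * (\<beta> + \<gamma> * \<tau>\<^sup>2) \<le> \<bar>U * r\<bar> * (\<beta> + \<gamma> * \<tau>\<^sup>2)"
      using assms by (intro mult_right_mono) auto
    moreover have "0 \<le> \<beta> * r\<^sup>2 + \<gamma> * U\<^sup>2 * \<tau>\<^sup>2"
      using assms by simp
    ultimately show ?thesis by linarith
  qed
  also have "\<dots> \<le> \<bar>U\<bar> * W * \<tau> * (\<beta> + \<gamma> * \<tau>\<^sup>2)"
  proof -
    have "\<bar>r\<bar> * (\<beta> + \<gamma> * \<tau>\<^sup>2) \<le> W * \<tau> * (\<beta> + \<gamma> * \<tau>\<^sup>2)"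
      using assms by (intro mult_right_mono) auto
    from mult_left_mono[OF this abs_ge_zero[of U]] show ?thesis
      by (simp add: abs_mult mult.assoc)
  qed
  finally show ?thesis .
qed

lemma integral_le_of_derivative_bound:
  fixes f F F' :: "real \<Rightarrow> real"
  assumes "t1 \<le> t2"
    and deriv: "\<forall>t\<in>{t1..t2}. (F has_real_derivative F' t) (at t within {t1..t2})"
    and "f integrable_on {t1..t2}" and bound: "\<forall>t\<in>{t1..t2}. f t \<le> c - F' t"
  shows "integral {t1..t2} f \<le> F t1 - F t2 + c * (t2 - t1)"
proof -
  have "(F' has_integral F t2 - F t1) {t1..t2}"
    using deriv by (intro fundamental_theorem_of_calculus[OF \<open>t1 \<le> t2\<close>])
      (simp add: has_real_derivative_iff_has_vector_derivative)
  from has_integral_diff[OF has_integral_const_real this]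
  have "((\<lambda>t. c - F' t) has_integral c * (t2 - t1) - (F t2 - F t1)) {t1..t2}"
    using \<open>t1 \<le> t2\<close> by (simp add: mult.commute)
  from has_integral_le[OF integrable_integral[OF \<open>f integrable_on {t1..t2}\<close>] this]
  show ?thesis
    using bound by simp
qed

lemma regularized_sqrt_deriv_bound:
  fixes d \<rho> c C T \<epsilon> :: real
  assumes d: "d \<le> 2 * \<rho> * (- c * T + C * sqrt T)"
    and "0 \<le> T" "0 \<le> \<rho>" "0 \<le> c" "0 \<le> C" "0 < \<epsilon>"
  shows "d / (2 * sqrt (T + \<epsilon>\<^sup>2)) \<le> \<rho> * (- c * sqrt (T + \<epsilon>\<^sup>2) + c * \<epsilon> + C)"
proof -
  define \<eta> where "\<eta> = sqrt (T + \<epsilon>\<^sup>2)"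
  have "\<epsilon> \<le> \<eta>" "sqrt T \<le> \<eta>"
    unfolding \<eta>_def using assms by (auto intro: real_le_rsqrt real_sqrt_le_mono)
  have "0 < T + \<epsilon>\<^sup>2"
    using assms by (simp add: add_nonneg_pos)
  then have \<eta>: "0 < \<eta>" "\<eta>\<^sup>2 = T + \<epsilon>\<^sup>2"
    unfolding \<eta>_def by simp_all
  have "\<eta> - \<epsilon> \<le> T / \<eta>"
  proof -
    have "\<epsilon> * \<epsilon> \<le> \<epsilon> * \<eta>"
      using \<open>\<epsilon> \<le> \<eta>\<close> \<open>0 < \<epsilon>\<close> by simp
    then show ?thesis
      using \<eta> by (simp add: field_simps power2_eq_square)
  qed
  from mult_left_mono[OF this \<open>0 \<le> c\<close>]
  have "- c * (T / \<eta>) \<le> - c * (\<eta> - \<epsilon>)"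
    by linarith
  moreover have "C * (sqrt T / \<eta>) \<le> C"
  proof (rule mult_left_le)
    show "sqrt T / \<eta> \<le> 1"
      using \<open>sqrt T \<le> \<eta>\<close> \<eta> by simp
  qed (rule \<open>0 \<le> C\<close>)
  ultimately have "- c * (T / \<eta>) + C * (sqrt T / \<eta>) \<le> - c * \<eta> + c * \<epsilon> + C"
    by (simp add: algebra_simps)
  moreover have "\<rho> * (- c * T + C * sqrt T) / \<eta> = \<rho> * (- c * (T / \<eta>) + C * (sqrt T / \<eta>))"
    using \<eta>(1) by (simp add: field_simps)
  ultimately have "\<rho> * (- c * T + C * sqrt T) / \<eta> \<le> \<rho> * (- c * \<eta> + c * \<epsilon> + C)"
    using \<open>0 \<le> \<rho>\<close> by (simp add: mult_left_mono)
  moreover have "d / (2 * \<eta>) \<le> \<rho> * (- c * T + C * sqrt T) / \<eta>"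
    using d \<eta> by (simp add: field_simps)
  ultimately show ?thesis
    unfolding \<eta>_def by linarith
qed

lemma tan_sq_drift_bound:
  fixes \<alpha> \<beta> \<gamma> \<rho> k U W B q A N p :: real
  assumes "0 < \<alpha>" "0 < \<beta>" "0 < \<gamma>" "0 \<le> \<rho>" "A \<noteq> 0"
    and N: "0 < N" "N = U\<^sup>2 + W\<^sup>2" and p: "p = (U * A + q) / N"
    and "0 \<le> W" "0 \<le> B" "\<bar>q\<bar> \<le> W * B" and cone: "B\<^sup>2 / A\<^sup>2 \<le> k"
  shows "((- 2 * \<beta> * \<rho> * (B\<^sup>2 + \<alpha> * p * q)) * A\<^sup>2 - B\<^sup>2 * (2 * \<gamma> * \<rho> * (A * (A + \<alpha> * U * p))))
           / (A\<^sup>2 * A\<^sup>2)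
         \<le> 2 * \<rho> * (- (\<beta> + \<gamma>) * (B\<^sup>2 / A\<^sup>2) + \<alpha> * (\<beta> + \<gamma> * k) * (\<bar>U\<bar> * W / N) * sqrt (B\<^sup>2 / A\<^sup>2))"
proof -
  define T \<tau> r where "T = B\<^sup>2 / A\<^sup>2" and "\<tau> = B / \<bar>A\<bar>" and "r = q / A"
  have \<tau>: "0 \<le> \<tau>" "\<tau>\<^sup>2 = T" "sqrt T = \<tau>"
    unfolding \<tau>_def T_def using \<open>0 \<le> B\<close> by (simp_all add: power_divide real_sqrt_divide)
  have "\<bar>r\<bar> \<le> W * \<tau>"
    unfolding r_def \<tau>_def using assms(5,11) by (simp add: abs_divide divide_right_mono)
  from drift_term_bound[OF _ _ \<tau>(1) this, of \<beta> \<gamma> U] assms(2,3)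
  have "- ((U + r) * (\<beta> * r + \<gamma> * U * T)) \<le> \<bar>U\<bar> * W * \<tau> * (\<beta> + \<gamma> * T)"
    using \<tau>(2) by simp
  also have "\<dots> \<le> \<bar>U\<bar> * W * \<tau> * (\<beta> + \<gamma> * k)"
  proof (rule mult_left_mono)
    show "\<beta> + \<gamma> * T \<le> \<beta> + \<gamma> * k"
      using mult_left_mono[OF cone, of \<gamma>] assms(3) unfolding T_def by simp
  qed (use assms(9) \<tau>(1) in simp)
  finally have "\<alpha> * (- ((U + r) * (\<beta> * r + \<gamma> * U * T))) \<le> \<alpha> * (\<bar>U\<bar> * W * \<tau> * (\<beta> + \<gamma> * k))"
    by (rule mult_left_mono) (use assms(1) in simp)
  then have "\<alpha> * (- ((U + r) * (\<beta> * r + \<gamma> * U * T))) / N \<le> \<alpha> * (\<bar>U\<bar> * W * \<tau> * (\<beta> + \<gamma> * k)) / N"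
    by (rule divide_right_mono) (use N(1) in simp)
  moreover have "\<alpha> * (\<bar>U\<bar> * W * \<tau> * (\<beta> + \<gamma> * k)) / N = \<alpha> * (\<beta> + \<gamma> * k) * (\<bar>U\<bar> * W / N) * \<tau>"
    by simp
  ultimately have "- \<alpha> * ((U + r) * (\<beta> * r + \<gamma> * U * T)) / N \<le> \<alpha> * (\<beta> + \<gamma> * k) * (\<bar>U\<bar> * W / N) * \<tau>"
    by simp
  then have "- (\<beta> + \<gamma>) * T - \<alpha> * ((U + r) * (\<beta> * r + \<gamma> * U * T)) / N
               \<le> - (\<beta> + \<gamma>) * T + \<alpha> * (\<beta> + \<gamma> * k) * (\<bar>U\<bar> * W / N) * \<tau>"
    by simp
  from mult_left_mono[OF this, of "2 * \<rho>"]
  have "2 * \<rho> * (- (\<beta> + \<gamma>) * T - \<alpha> * ((U + r) * (\<beta> * r + \<gamma> * U * T)) / N)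
          \<le> 2 * \<rho> * (- (\<beta> + \<gamma>) * T + \<alpha> * (\<beta> + \<gamma> * k) * (\<bar>U\<bar> * W / N) * \<tau>)"
    using assms(4) by simp
  moreover have "((- 2 * \<beta> * \<rho> * (B\<^sup>2 + \<alpha> * p * q)) * A\<^sup>2 - B\<^sup>2 * (2 * \<gamma> * \<rho> * (A * (A + \<alpha> * U * p))))
           / (A\<^sup>2 * A\<^sup>2)
       = 2 * \<rho> * (- (\<beta> + \<gamma>) * T - \<alpha> * ((U + r) * (\<beta> * r + \<gamma> * U * T)) / N)"
    unfolding p T_def r_def using assms(5) N(1) by (simp add: field_simps power2_eq_square)
  ultimately show ?thesis
    unfolding T_def[symmetric] \<tau>(3) by simp
qed

definition cone_tan_integral_bound :: "real \<Rightarrow> real \<Rightarrow> real \<Rightarrow> real" where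
  "cone_tan_integral_bound \<alpha> \<gamma> \<beta> =
     (sqrt (\<alpha>\<^sup>2 / 4 + 1) + \<alpha> * (\<beta> + \<gamma> * (\<alpha>\<^sup>2 / 4)) / (\<beta> + \<gamma>) * (pi / 2)) / (\<beta> + \<gamma>) + 1"

locale cone_trajectory =
  fixes \<alpha> \<gamma> \<beta> r0 T0 :: real
    and x v :: "real \<Rightarrow> real \<times> (real^'n)"
  assumes \<alpha>: "0 < \<alpha>" "\<alpha> < 1" and \<gamma>: "0 < \<gamma>" and \<beta>: "0 < \<beta>" and T0: "0 < T0"
    and x_deriv: "\<forall>t\<in>{0..T0}. (x has_vector_derivative VF \<alpha> \<gamma> \<beta> (x t)) (at t within {0..T0})"
    and x_enters: "norm (x 0) = r0" and x_exits: "norm (x T0) = r0"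
    and x_inside: "\<forall>t\<in>{0<..<T0}. norm (x t) < r0"
    and v_deriv: "\<forall>t\<in>{0..T0}. \<exists>L. (VF \<alpha> \<gamma> \<beta> has_derivative L) (at (x t)) \<and>
                                  (v has_vector_derivative L (v t)) (at t within {0..T0})"
    and v0_not_vertical: "fst (v 0) \<noteq> 0"
    and v0_in_cone: "tan (axis_angle (v 0)) \<le> \<alpha> / 2"
begin

definition xu :: "real \<Rightarrow> real" where "xu t = fst (x t)"
definition xs :: "real \<Rightarrow> real^'n" where "xs t = snd (x t)"
definition vu :: "real \<Rightarrow> real" where "vu t = fst (v t)"
definition vs :: "real \<Rightarrow> real^'n" where "vs t = snd (v t)"
definition rate :: "real \<Rightarrow> real" where "rate t = norm (x t) powr \<alpha>"

text \<open>\<open>proj\<close> is the factor \<open>\<langle>x, v\<rangle> / |x|\<^sup>2\<close> produced by differentiating \<open>|x|\<^sup>\<alpha>\<close> in direction \<open>v\<close>.\<close>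

definition proj :: "real \<Rightarrow> real"
  where "proj t = (xu t * vu t + inner (xs t) (vs t)) / (norm (x t))\<^sup>2"

lemma norm_x_sq: "(norm (x t))\<^sup>2 = (xu t)\<^sup>2 + (norm (xs t))\<^sup>2"
  unfolding xu_def xs_def by (cases "x t") (simp add: norm_Pair)

lemma rate_nonneg: "0 \<le> rate t"
  unfolding rate_def by simp

lemma rate_le:
  assumes "t \<in> {0..T0}"
  shows "rate t \<le> r0 powr \<alpha>"
proof -
  have "t = 0 \<or> t = T0 \<or> t \<in> {0<..<T0}"
    using assms by auto
  then have "norm (x t) \<le> r0"
    using x_enters x_exits x_inside by (auto simp: less_imp_le)
  then show ?thesis
    unfolding rate_def using \<alpha> by (simp add: powr_mono2)
qed

lemma abs_rate_le: "t \<in> {0..T0} \<Longrightarrow> \<bar>c * rate t\<bar> \<le> \<bar>c\<bar> * r0 powr \<alpha>"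
  using rate_le rate_nonneg by (simp add: abs_mult mult_left_mono)

lemma VF_x: "VF \<alpha> \<gamma> \<beta> (x t) = (\<gamma> * rate t * xu t, (- \<beta> * rate t) *\<^sub>R xs t)"
  unfolding VF_def rate_def xu_def xs_def by simp

lemma xu_deriv:
  "t \<in> {0..T0} \<Longrightarrow> (xu has_real_derivative \<gamma> * rate t * xu t) (at t within {0..T0})"
  using has_vector_derivative_fst[OF x_deriv[rule_format]] unfolding VF_x xu_def by simp

lemma xs_deriv:
  "t \<in> {0..T0} \<Longrightarrow> (xs has_vector_derivative (- \<beta> * rate t) *\<^sub>R xs t) (at t within {0..T0})"
  using has_vector_derivative_snd[OF x_deriv[rule_format]] unfolding VF_x xs_def by simp

lemma xu_sq_deriv:
  assumes "t \<in> {0..T0}"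
  shows "((\<lambda>s. (xu s)\<^sup>2) has_real_derivative (2 * \<gamma> * rate t) * (xu t)\<^sup>2) (at t within {0..T0})"
  using DERIV_power[OF xu_deriv[OF assms], of 2]
  by (rule DERIV_cong) (simp add: power2_eq_square)

lemma xs_sq_deriv:
  assumes "t \<in> {0..T0}"
  shows "((\<lambda>s. (norm (xs s))\<^sup>2) has_real_derivative (- 2 * \<beta> * rate t) * (norm (xs t))\<^sup>2)
           (at t within {0..T0})"
  using has_vector_derivative_norm_power2[OF xs_deriv[OF assms]]
  by (rule DERIV_cong) (simp add: power2_norm_eq_inner)

lemma xu_zero_iff:
  assumes "t \<in> {0..T0}"
  shows "xu t = 0 \<longleftrightarrow> xu 0 = 0"
  using nonneg_linear_ode_zero_iff[OF ballI[OF xu_sq_deriv] ballI[OF abs_rate_le] _ assms] by simp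

lemma xs_zero_iff:
  assumes "t \<in> {0..T0}"
  shows "xs t = 0 \<longleftrightarrow> xs 0 = 0"
  using nonneg_linear_ode_zero_iff[OF ballI[OF xs_sq_deriv] ballI[OF abs_rate_le] _ assms] by simp

text \<open>A trajectory in the stable subspace never reaches the boundary again: there
  \<open>norm x\<close> is nonincreasing, yet \<open>norm (x T0) = r0 > norm (x (T0/2))\<close>.\<close>

lemma xu_0_nonzero: "xu 0 \<noteq> 0"
proof
  assume "xu 0 = 0"
  then have stable: "(norm (x t))\<^sup>2 = (norm (xs t))\<^sup>2" if "t \<in> {0..T0}" for t
    using xu_zero_iff[OF that] norm_x_sq[of t] by simp
  have "(\<lambda>s. - (norm (xs s))\<^sup>2) (T0/2) \<le> (\<lambda>s. - (norm (xs s))\<^sup>2) T0"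
  proof (rule has_real_derivative_nonneg_imp_mono_Icc
      [where g = "\<lambda>s. - (norm (xs s))\<^sup>2" and g' = "\<lambda>t. 2 * \<beta> * rate t * (norm (xs t))\<^sup>2"])
    show "\<forall>t\<in>{0..T0}. ((\<lambda>s. - (norm (xs s))\<^sup>2) has_real_derivative 2 * \<beta> * rate t * (norm (xs t))\<^sup>2)
                        (at t within {0..T0})"
      using DERIV_minus[OF xs_sq_deriv] by simp
  qed (use T0 \<beta> rate_nonneg in auto)
  then have "(norm (x T0))\<^sup>2 \<le> (norm (x (T0/2)))\<^sup>2"
    using stable[of T0] stable[of "T0/2"] T0 by simp
  also have "\<dots> < r0\<^sup>2"
    using x_inside T0 by (intro power_strict_mono) auto
  finally have "(norm (x T0))\<^sup>2 < r0\<^sup>2" .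
  then show False
    using x_exits by simp
qed

lemma xu_nonzero: "t \<in> {0..T0} \<Longrightarrow> xu t \<noteq> 0"
  using xu_zero_iff xu_0_nonzero by blast

lemma x_nonzero: "t \<in> {0..T0} \<Longrightarrow> x t \<noteq> 0"
  using xu_nonzero unfolding xu_def by (metis fst_zero)

lemma norm_x_sq_pos: "t \<in> {0..T0} \<Longrightarrow> 0 < (norm (x t))\<^sup>2"
  using x_nonzero by simp

lemma v_deriv_explicit:
  assumes t: "t \<in> {0..T0}"
  shows "(v has_vector_derivative
           (\<gamma> * rate t * (vu t + \<alpha> * xu t * proj t), (- \<beta> * rate t) *\<^sub>R (vs t + (\<alpha> * proj t) *\<^sub>R xs t)))
           (at t within {0..T0})"
proof -
  obtain L where L: "(VF \<alpha> \<gamma> \<beta> has_derivative L) (at (x t))"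
    "(v has_vector_derivative L (v t)) (at t within {0..T0})"
    using v_deriv t by blast
  have "L = (\<lambda>h. (\<alpha> * norm (x t) powr \<alpha> / (norm (x t))\<^sup>2 * inner (x t) h) *\<^sub>R
                   (\<gamma> * fst (x t), - \<beta> *\<^sub>R snd (x t)) + norm (x t) powr \<alpha> *\<^sub>R (\<gamma> * fst h, - \<beta> *\<^sub>R snd h))"
    using has_derivative_unique[OF L(1) VF_has_derivative[OF x_nonzero[OF t]]] .
  then have "L (v t) = (\<alpha> * rate t * proj t) *\<^sub>R (\<gamma> * xu t, - \<beta> *\<^sub>R xs t) + rate t *\<^sub>R (\<gamma> * vu t, - \<beta> *\<^sub>R vs t)"
    unfolding rate_def proj_def xu_def xs_def vu_def vs_def
    by (cases "x t", cases "v t") simp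
  also have "\<dots> = (\<gamma> * rate t * (vu t + \<alpha> * xu t * proj t), (- \<beta> * rate t) *\<^sub>R (vs t + (\<alpha> * proj t) *\<^sub>R xs t))"
    by (simp add: algebra_simps)
  finally show ?thesis
    using L(2) by simp
qed

lemma vu_deriv:
  "t \<in> {0..T0} \<Longrightarrow> (vu has_real_derivative \<gamma> * rate t * (vu t + \<alpha> * xu t * proj t)) (at t within {0..T0})"
  using has_vector_derivative_fst[OF v_deriv_explicit] unfolding vu_def by simp

lemma vu_sq_deriv:
  assumes "t \<in> {0..T0}"
  shows "((\<lambda>s. (vu s)\<^sup>2) has_real_derivative 2 * \<gamma> * rate t * (vu t * (vu t + \<alpha> * xu t * proj t)))
           (at t within {0..T0})"
  using DERIV_power[OF vu_deriv[OF assms], of 2]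
  by (rule DERIV_cong) (simp add: power2_eq_square)

lemma vs_sq_deriv:
  assumes "t \<in> {0..T0}"
  shows "((\<lambda>s. (norm (vs s))\<^sup>2) has_real_derivative
            - 2 * \<beta> * rate t * ((norm (vs t))\<^sup>2 + \<alpha> * proj t * inner (xs t) (vs t)))
           (at t within {0..T0})"
  using has_vector_derivative_norm_power2[OF has_vector_derivative_snd[OF v_deriv_explicit[OF assms]]]
  unfolding vs_def[symmetric]
  by (rule DERIV_cong) (simp add: power2_norm_eq_inner inner_add_right inner_commute algebra_simps)

lemma proj_eq: "proj t = (xu t * vu t + inner (xs t) (vs t)) / ((xu t)\<^sup>2 + (norm (xs t))\<^sup>2)"
  unfolding proj_def norm_x_sq ..

lemma v0_in_cone_sq: "(norm (vs 0))\<^sup>2 \<le> \<alpha>\<^sup>2 / 4 * (vu 0)\<^sup>2"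
proof -
  have "norm (vs 0) / \<bar>vu 0\<bar> \<le> \<alpha> / 2"
    using v0_in_cone tan_axis_angle[OF v0_not_vertical] unfolding vu_def vs_def by simp
  moreover have "0 < \<bar>vu 0\<bar>"
    using v0_not_vertical unfolding vu_def by simp
  ultimately have "norm (vs 0) \<le> \<alpha> / 2 * \<bar>vu 0\<bar>"
    by (simp add: pos_divide_le_eq)
  then have "(norm (vs 0))\<^sup>2 \<le> (\<alpha> / 2 * \<bar>vu 0\<bar>)\<^sup>2"
    by (intro power_mono) auto
  then show ?thesis
    by (simp add: power_mult_distrib power_divide)
qed

text \<open>Outside the cone the excess \<open>|vs|\<^sup>2 - \<alpha>\<^sup>2/4 vu\<^sup>2\<close> grows at most linearly in itself,
  so starting from a nonpositive value it stays nonpositive.\<close>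

lemma cone_invariant:
  assumes t: "t \<in> {0..T0}"
  shows "(norm (vs t))\<^sup>2 \<le> \<alpha>\<^sup>2 / 4 * (vu t)\<^sup>2"
proof -
  define k where "k = \<alpha>\<^sup>2 / 4"
  have k: "0 < k" "k \<le> 1"
    using \<alpha> power_le_one[of \<alpha> 2] unfolding k_def by auto
  define g' where "g' s = - 2 * \<beta> * rate s * ((norm (vs s))\<^sup>2 + \<alpha> * proj s * inner (xs s) (vs s))
                         - k * (2 * \<gamma> * rate s * (vu s * (vu s + \<alpha> * xu s * proj s)))" for s
  have "(\<lambda>s. (norm (vs s))\<^sup>2 - k * (vu s)\<^sup>2) t \<le> 0"
  proof (rule nonpos_if_derivative_le_linear[where g = "\<lambda>s. (norm (vs s))\<^sup>2 - k * (vu s)\<^sup>2" and g' = g' and K = "2 * k * \<gamma> * r0 powr \<alpha>"])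
    show "\<forall>s\<in>{0..T0}. ((\<lambda>s. (norm (vs s))\<^sup>2 - k * (vu s)\<^sup>2) has_real_derivative g' s) (at s within {0..T0})"
      unfolding g'_def using DERIV_diff[OF vs_sq_deriv DERIV_cmult[OF vu_sq_deriv]] by blast
    show "\<forall>s\<in>{0..T0}. 0 \<le> (norm (vs s))\<^sup>2 - k * (vu s)\<^sup>2 \<longrightarrow>
                       g' s \<le> 2 * k * \<gamma> * r0 powr \<alpha> * ((norm (vs s))\<^sup>2 - k * (vu s)\<^sup>2)"
    proof (intro ballI impI)
      fix s assume s: "s \<in> {0..T0}" and outside: "0 \<le> (norm (vs s))\<^sup>2 - k * (vu s)\<^sup>2"
      have drift: "- \<beta> * ((norm (vs s))\<^sup>2 + \<alpha> * proj s * inner (xs s) (vs s))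
                     - \<alpha>\<^sup>2 / 4 * \<gamma> * (vu s * (vu s + \<alpha> * xu s * proj s))
                   \<le> \<alpha>\<^sup>2 / 4 * \<gamma> * ((norm (vs s))\<^sup>2 - \<alpha>\<^sup>2 / 4 * (vu s)\<^sup>2)"
        by (rule cone_drift_bound[OF \<alpha> \<gamma> \<beta> _ refl proj_eq norm_ge_zero norm_ge_zero
              Cauchy_Schwarz_ineq2])
          (use norm_x_sq_pos[OF s] outside in \<open>simp_all add: norm_x_sq k_def\<close>)
      have "g' s = 2 * rate s * (- \<beta> * ((norm (vs s))\<^sup>2 + \<alpha> * proj s * inner (xs s) (vs s))
                     - k * \<gamma> * (vu s * (vu s + \<alpha> * xu s * proj s)))"
        unfolding g'_def by (simp add: algebra_simps)
      also have "\<dots> \<le> 2 * rate s * (k * \<gamma> * ((norm (vs s))\<^sup>2 - k * (vu s)\<^sup>2))"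
        by (rule mult_left_mono) (use drift rate_nonneg[of s] in \<open>simp_all add: k_def\<close>)
      also have "\<dots> \<le> 2 * r0 powr \<alpha> * (k * \<gamma> * ((norm (vs s))\<^sup>2 - k * (vu s)\<^sup>2))"
        by (rule mult_right_mono) (use rate_le[OF s] outside k \<gamma> in auto)
      finally show "g' s \<le> 2 * k * \<gamma> * r0 powr \<alpha> * ((norm (vs s))\<^sup>2 - k * (vu s)\<^sup>2)"
        by (simp add: algebra_simps)
    qed
  qed (use v0_in_cone_sq t in \<open>simp_all add: k_def\<close>)
  then show ?thesis
    unfolding k_def by simp
qed

lemma vs_le_vu: "t \<in> {0..T0} \<Longrightarrow> norm (vs t) \<le> \<bar>vu t\<bar>"
proof -
  assume t: "t \<in> {0..T0}"
  have "\<alpha>\<^sup>2 / 4 \<le> 1"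
    using \<alpha> power_le_one[of \<alpha> 2] by auto
  from mult_right_mono[OF this zero_le_power2[of "vu t"]]
  have "(norm (vs t))\<^sup>2 \<le> \<bar>vu t\<bar>\<^sup>2"
    using cone_invariant[OF t] by simp
  then show ?thesis
    by (rule power2_le_imp_le) simp
qed

lemma vu_nonzero:
  assumes t: "t \<in> {0..T0}"
  shows "vu t \<noteq> 0"
proof -
  have "0 < (\<lambda>s. (vu s)\<^sup>2) t"
  proof (rule positive_if_derivative_ge_linear[where g = "\<lambda>s. (vu s)\<^sup>2" and K = "2 * \<gamma> * r0 powr \<alpha>"
        and g' = "\<lambda>s. 2 * \<gamma> * rate s * (vu s * (vu s + \<alpha> * xu s * proj s))"])
    show "\<forall>s\<in>{0..T0}. ((\<lambda>s. (vu s)\<^sup>2) has_real_derivative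
                          2 * \<gamma> * rate s * (vu s * (vu s + \<alpha> * xu s * proj s))) (at s within {0..T0})"
      using vu_sq_deriv by blast
    show "\<forall>s\<in>{0..T0}. - (2 * \<gamma> * r0 powr \<alpha>) * (vu s)\<^sup>2 \<le> 2 * \<gamma> * rate s * (vu s * (vu s + \<alpha> * xu s * proj s))"
    proof
      fix s assume s: "s \<in> {0..T0}"
      have "- (vu s)\<^sup>2 \<le> vu s * (vu s + \<alpha> * xu s * proj s)"
        by (rule horizontal_drift_bound[OF \<alpha> _ refl proj_eq norm_ge_zero norm_ge_zero
              Cauchy_Schwarz_ineq2 vs_le_vu[OF s]])
          (use norm_x_sq_pos[OF s] in \<open>simp add: norm_x_sq\<close>)
      then have "2 * \<gamma> * rate s * (- (vu s)\<^sup>2) \<le> 2 * \<gamma> * rate s * (vu s * (vu s + \<alpha> * xu s * proj s))"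
        by (rule mult_left_mono) (use \<gamma> rate_nonneg[of s] in auto)
      moreover have "- (2 * \<gamma> * r0 powr \<alpha>) * (vu s)\<^sup>2 \<le> 2 * \<gamma> * rate s * (- (vu s)\<^sup>2)"
        using rate_le[OF s] \<gamma> by (simp add: mult_right_mono)
      ultimately show "- (2 * \<gamma> * r0 powr \<alpha>) * (vu s)\<^sup>2 \<le> 2 * \<gamma> * rate s * (vu s * (vu s + \<alpha> * xu s * proj s))"
        by linarith
    qed
  qed (use v0_not_vertical t in \<open>simp_all add: vu_def\<close>)
  then show ?thesis
    by simp
qed

lemma tan_angle_v: "t \<in> {0..T0} \<Longrightarrow> tan (axis_angle (v t)) = norm (vs t) / \<bar>vu t\<bar>"
  using tan_axis_angle[of "v t"] vu_nonzero unfolding vu_def vs_def by simp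

definition mixing :: "real \<Rightarrow> real"
  where "mixing t = \<bar>xu t\<bar> * norm (xs t) / (norm (x t))\<^sup>2"

definition tilt :: "real \<Rightarrow> real"
  where "tilt t = arctan (norm (xs t) / \<bar>xu t\<bar>)"

lemma mixing_nonneg: "0 \<le> mixing t"
  unfolding mixing_def by simp

lemma tilt_bounds: "0 \<le> tilt t" "tilt t < pi / 2"
  unfolding tilt_def by (simp, rule arctan_ubound)

text \<open>\<open>norm (xs) / \<bar>xu\<bar>\<close> decays at rate \<open>(\<beta> + \<gamma>) rate\<close>, so \<open>tilt\<close> decreases at rate exactly
  \<open>(\<beta> + \<gamma>) rate mixing\<close>; as \<open>tilt\<close> is bounded, \<open>rate mixing\<close> has bounded integral.\<close>

lemma tilt_deriv:
  assumes t: "t \<in> {0..T0}"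
  shows "(tilt has_real_derivative - (\<beta> + \<gamma>) * rate t * mixing t) (at t within {0..T0})"
proof (cases "xs 0 = 0")
  case True
  then have "mixing t = 0" "\<forall>s\<in>{0..T0}. tilt s = 0"
    using xs_zero_iff t unfolding mixing_def tilt_def by auto
  then show ?thesis
    using has_field_derivative_transform_within[OF DERIV_const[of 0] zero_less_one t] by simp
next
  case False
  define r where "r s = (norm (xs s))\<^sup>2 / (xu s)\<^sup>2" for s
  define P Q where "P = \<bar>xu t\<bar>" and "Q = norm (xs t)"
  have PQ: "0 < P" "0 < Q"
    unfolding P_def Q_def using False xs_zero_iff[OF t] xu_nonzero[OF t] by auto
  have xu2: "(xu t)\<^sup>2 \<noteq> 0"
    using xu_nonzero[OF t] by simp
  have quotient: "(c1 * Y * X - Y * (c2 * X)) / (X * X) = (c1 - c2) * (Y / X)"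
    if "X \<noteq> 0" for c1 c2 X Y :: real
    using that by (simp add: field_simps)
  have "(r has_real_derivative (- 2 * \<beta> * rate t - 2 * \<gamma> * rate t) * r t) (at t within {0..T0})"
    unfolding r_def using DERIV_divide[OF xs_sq_deriv[OF t] xu_sq_deriv[OF t] xu2]
    by (rule DERIV_cong) (rule quotient[OF xu2])
  then have "(r has_real_derivative - 2 * ((\<beta> + \<gamma>) * rate t) * r t) (at t within {0..T0})"
    by (simp add: algebra_simps)
  moreover have "0 < r t"
    unfolding r_def using PQ unfolding P_def Q_def by simp
  ultimately have "((\<lambda>s. arctan (sqrt (r s))) has_real_derivative
                      - ((\<beta> + \<gamma>) * rate t) * (sqrt (r t) / (1 + r t))) (at t within {0..T0})"
    by (rule DERIV_arctan_sqrt_linear_decay)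
  moreover have "(\<lambda>s. arctan (sqrt (r s))) = tilt"
    unfolding r_def tilt_def by (simp add: real_sqrt_divide power_divide)
  moreover have "sqrt (r t) / (1 + r t) = mixing t"
  proof -
    have "sqrt (r t) / (1 + r t) = Q / P / (1 + (Q / P)\<^sup>2)"
      unfolding r_def P_def Q_def by (simp add: real_sqrt_divide power_divide)
    also have "\<dots> = P * Q / (P\<^sup>2 + Q\<^sup>2)"
      using PQ by (simp add: field_simps power2_eq_square)
    also have "\<dots> = mixing t"
      unfolding mixing_def norm_x_sq P_def Q_def by simp
    finally show ?thesis .
  qed
  ultimately have "(tilt has_real_derivative - ((\<beta> + \<gamma>) * rate t) * mixing t) (at t within {0..T0})"
    by simp
  then show ?thesis
    by (rule DERIV_cong) (simp add: algebra_simps)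
qed

definition tan_sq :: "real \<Rightarrow> real" where "tan_sq t = (norm (vs t))\<^sup>2 / (vu t)\<^sup>2"

lemma tan_sq_nonneg: "0 \<le> tan_sq t"
  unfolding tan_sq_def by simp

lemma tan_sq_le: "t \<in> {0..T0} \<Longrightarrow> tan_sq t \<le> \<alpha>\<^sup>2 / 4"
  unfolding tan_sq_def using cone_invariant vu_nonzero by (simp add: divide_le_eq)

lemma tan_angle_v_eq_sqrt: "t \<in> {0..T0} \<Longrightarrow> tan (axis_angle (v t)) = sqrt (tan_sq t)"
  unfolding tan_sq_def by (simp add: tan_angle_v real_sqrt_divide)

lemma tan_sq_deriv_bound:
  assumes t: "t \<in> {0..T0}"
  shows "\<exists>d. (tan_sq has_real_derivative d) (at t within {0..T0}) \<and>
             d \<le> 2 * rate t * (- (\<beta> + \<gamma>) * tan_sq t + \<alpha> * (\<beta> + \<gamma> * (\<alpha>\<^sup>2 / 4)) * mixing t * sqrt (tan_sq t))"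
proof (intro exI conjI)
  have vu2: "(vu t)\<^sup>2 \<noteq> 0"
    using vu_nonzero[OF t] by simp
  show "(tan_sq has_real_derivative
          ((- 2 * \<beta> * rate t * ((norm (vs t))\<^sup>2 + \<alpha> * proj t * inner (xs t) (vs t))) * (vu t)\<^sup>2
             - (norm (vs t))\<^sup>2 * (2 * \<gamma> * rate t * (vu t * (vu t + \<alpha> * xu t * proj t))))
          / ((vu t)\<^sup>2 * (vu t)\<^sup>2)) (at t within {0..T0})"
    unfolding tan_sq_def[abs_def] by (rule DERIV_divide[OF vs_sq_deriv[OF t] vu_sq_deriv[OF t] vu2])
  show "((- 2 * \<beta> * rate t * ((norm (vs t))\<^sup>2 + \<alpha> * proj t * inner (xs t) (vs t))) * (vu t)\<^sup>2
             - (norm (vs t))\<^sup>2 * (2 * \<gamma> * rate t * (vu t * (vu t + \<alpha> * xu t * proj t))))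
          / ((vu t)\<^sup>2 * (vu t)\<^sup>2)
        \<le> 2 * rate t * (- (\<beta> + \<gamma>) * tan_sq t + \<alpha> * (\<beta> + \<gamma> * (\<alpha>\<^sup>2 / 4)) * mixing t * sqrt (tan_sq t))"
    unfolding tan_sq_def mixing_def norm_x_sq
    by (rule tan_sq_drift_bound[OF \<alpha>(1) \<beta> \<gamma> rate_nonneg vu_nonzero[OF t] _ refl proj_eq
          norm_ge_zero norm_ge_zero Cauchy_Schwarz_ineq2])
      (use norm_x_sq_pos[OF t] tan_sq_le[OF t] in \<open>simp_all add: norm_x_sq tan_sq_def\<close>)
qed

text \<open>\<open>tan \<rho> = \<surd>tan_sq\<close> need not be differentiable where \<open>vs = 0\<close>; \<open>tan_reg \<epsilon>\<close> is.\<close>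

definition tan_reg :: "real \<Rightarrow> real \<Rightarrow> real" where "tan_reg \<epsilon> t = sqrt (tan_sq t + \<epsilon>\<^sup>2)"

lemma tan_reg_deriv_bound:
  assumes "0 < \<epsilon>" and t: "t \<in> {0..T0}"
  shows "\<exists>d. (tan_reg \<epsilon> has_real_derivative d) (at t within {0..T0}) \<and>
             d \<le> rate t * (- (\<beta> + \<gamma>) * tan_reg \<epsilon> t + (\<beta> + \<gamma>) * \<epsilon>
                           + \<alpha> * (\<beta> + \<gamma> * (\<alpha>\<^sup>2 / 4)) * mixing t)"
proof -
  obtain d where d: "(tan_sq has_real_derivative d) (at t within {0..T0})"
    "d \<le> 2 * rate t * (- (\<beta> + \<gamma>) * tan_sq t + \<alpha> * (\<beta> + \<gamma> * (\<alpha>\<^sup>2 / 4)) * mixing t * sqrt (tan_sq t))"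
    using tan_sq_deriv_bound[OF t] by blast
  have "0 < \<epsilon>\<^sup>2"
    using \<open>0 < \<epsilon>\<close> by simp
  then have pos: "0 < tan_sq t + \<epsilon>\<^sup>2"
    by (rule add_nonneg_pos[OF tan_sq_nonneg])
  have "((\<lambda>s. tan_sq s + \<epsilon>\<^sup>2) has_real_derivative d) (at t within {0..T0})"
    using DERIV_add[OF d(1) DERIV_const[of "\<epsilon>\<^sup>2"]] by simp
  from DERIV_sqrt_comp[OF this pos]
  have "(tan_reg \<epsilon> has_real_derivative d / (2 * tan_reg \<epsilon> t)) (at t within {0..T0})"
    unfolding tan_reg_def[abs_def] by simp
  moreover have "0 \<le> \<alpha> * (\<beta> + \<gamma> * (\<alpha>\<^sup>2 / 4)) * mixing t"
    using \<alpha> \<beta> \<gamma> mixing_nonneg[of t] by simp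
  moreover have "0 \<le> \<beta> + \<gamma>"
    using \<beta> \<gamma> by simp
  ultimately have "d / (2 * tan_reg \<epsilon> t)
          \<le> rate t * (- (\<beta> + \<gamma>) * tan_reg \<epsilon> t + (\<beta> + \<gamma>) * \<epsilon> + \<alpha> * (\<beta> + \<gamma> * (\<alpha>\<^sup>2 / 4)) * mixing t)"
    unfolding tan_reg_def
    using regularized_sqrt_deriv_bound[OF d(2) tan_sq_nonneg rate_nonneg _ _ \<open>0 < \<epsilon>\<close>] by blast
  with \<open>(tan_reg \<epsilon> has_real_derivative d / (2 * tan_reg \<epsilon> t)) (at t within {0..T0})\<close>
  show ?thesis
    by blast
qed

definition tilt_weight :: real where "tilt_weight = \<alpha> * (\<beta> + \<gamma> * (\<alpha>\<^sup>2 / 4)) / (\<beta> + \<gamma>)"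

text \<open>The weighted \<open>tilt\<close> absorbs the \<open>mixing\<close> term in the derivative bound of \<open>tan_reg\<close>.\<close>

definition lyapunov :: "real \<Rightarrow> real \<Rightarrow> real"
  where "lyapunov \<epsilon> t = (tan_reg \<epsilon> t + tilt_weight * tilt t) / (\<beta> + \<gamma>)"

lemma lyapunov_deriv_bound:
  assumes "0 < \<epsilon>" and t: "t \<in> {0..T0}"
  shows "\<exists>D. (lyapunov \<epsilon> has_real_derivative D) (at t within {0..T0}) \<and>
             rate t * tan (axis_angle (v t)) \<le> r0 powr \<alpha> * \<epsilon> - D"
proof -
  define C where "C = \<alpha> * (\<beta> + \<gamma> * (\<alpha>\<^sup>2 / 4))"
  have "0 < \<beta> + \<gamma>"
    using \<beta> \<gamma> by simp
  obtain d where d: "(tan_reg \<epsilon> has_real_derivative d) (at t within {0..T0})"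
    "d \<le> rate t * (- (\<beta> + \<gamma>) * tan_reg \<epsilon> t + (\<beta> + \<gamma>) * \<epsilon> + C * mixing t)"
    using tan_reg_deriv_bound[OF assms] unfolding C_def by blast
  have weight: "tilt_weight * (- (\<beta> + \<gamma>) * rate t * mixing t) = - (C * rate t * mixing t)"
    unfolding tilt_weight_def C_def using \<open>0 < \<beta> + \<gamma>\<close> by (simp add: field_simps)
  have "(lyapunov \<epsilon> has_real_derivative (d - C * rate t * mixing t) / (\<beta> + \<gamma>)) (at t within {0..T0})"
    using DERIV_cdivide[OF DERIV_add[OF d(1) DERIV_cmult[OF tilt_deriv[OF t], of tilt_weight]],
        of "\<beta> + \<gamma>"]
    unfolding lyapunov_def[abs_def] weight by (rule DERIV_cong) simp
  moreover have "rate t * tan (axis_angle (v t)) \<le> r0 powr \<alpha> * \<epsilon> - (d - C * rate t * mixing t) / (\<beta> + \<gamma>)"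
  proof -
    have "(d - C * rate t * mixing t) / (\<beta> + \<gamma>)
            \<le> (rate t * (- (\<beta> + \<gamma>) * tan_reg \<epsilon> t + (\<beta> + \<gamma>) * \<epsilon> + C * mixing t)
                 - C * rate t * mixing t) / (\<beta> + \<gamma>)"
      using d(2) \<open>0 < \<beta> + \<gamma>\<close> by (simp add: divide_right_mono)
    also have "\<dots> = rate t * \<epsilon> - rate t * tan_reg \<epsilon> t"
      using \<open>0 < \<beta> + \<gamma>\<close> by (simp add: field_simps)
    finally have "(d - C * rate t * mixing t) / (\<beta> + \<gamma>) \<le> rate t * \<epsilon> - rate t * tan_reg \<epsilon> t" .
    moreover have "rate t * \<epsilon> \<le> r0 powr \<alpha> * \<epsilon>"
      using rate_le[OF t] \<open>0 < \<epsilon>\<close> by simp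
    moreover have "rate t * tan (axis_angle (v t)) \<le> rate t * tan_reg \<epsilon> t"
      unfolding tan_angle_v_eq_sqrt[OF t] tan_reg_def
      by (rule mult_left_mono) (simp_all add: rate_nonneg)
    ultimately show ?thesis
      by linarith
  qed
  ultimately show ?thesis
    by blast
qed

lemma lyapunov_oscillation:
  assumes "0 < \<epsilon>" "\<epsilon> \<le> 1" and t: "t \<in> {0..T0}"
  shows "lyapunov \<epsilon> t - lyapunov \<epsilon> s \<le> (sqrt (\<alpha>\<^sup>2 / 4 + 1) + tilt_weight * (pi / 2)) / (\<beta> + \<gamma>)"
proof -
  have "0 < \<beta> + \<gamma>" "0 \<le> tilt_weight"
    unfolding tilt_weight_def using \<alpha> \<beta> \<gamma> by simp_all
  have "tan_reg \<epsilon> t \<le> sqrt (\<alpha>\<^sup>2 / 4 + 1)"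
    unfolding tan_reg_def using tan_sq_le[OF t] assms(1,2)
    by (intro real_sqrt_le_mono add_mono) (simp_all add: power_le_one)
  moreover have "0 \<le> tan_reg \<epsilon> s"
    unfolding tan_reg_def using tan_sq_nonneg[of s] by simp
  moreover have "tilt_weight * (tilt t - tilt s) \<le> tilt_weight * (pi / 2)"
    by (rule mult_left_mono) (use tilt_bounds[of t] tilt_bounds[of s] \<open>0 \<le> tilt_weight\<close> in auto)
  ultimately have "tan_reg \<epsilon> t + tilt_weight * tilt t - (tan_reg \<epsilon> s + tilt_weight * tilt s)
                     \<le> sqrt (\<alpha>\<^sup>2 / 4 + 1) + tilt_weight * (pi / 2)"
    by (simp add: algebra_simps)
  then show ?thesis
    unfolding lyapunov_def diff_divide_distrib[symmetric] using \<open>0 < \<beta> + \<gamma>\<close>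
    by (rule divide_right_mono[OF _ less_imp_le])
qed

lemma integrand_continuous:
  assumes "{t1..t2} \<subseteq> {0..T0}"
  shows "continuous_on {t1..t2} (\<lambda>t. norm (x t) powr \<alpha> * tan (axis_angle (v t)))"
proof -
  have "continuous_on {0..T0} x" "continuous_on {0..T0} v"
    using x_deriv v_deriv_explicit
    by (meson continuous_on_eq_continuous_within has_vector_derivative_continuous)+
  then have "continuous_on {t1..t2} (\<lambda>t. norm (x t) powr \<alpha> * (norm (snd (v t)) / \<bar>fst (v t)\<bar>))"
    using assms x_nonzero vu_nonzero unfolding vu_def
    by (auto intro!: continuous_intros intro: continuous_on_subset)
  then show ?thesis
    using assms tan_angle_v unfolding vu_def vs_def
    by (auto intro: continuous_on_cong[THEN iffD1, rotated])
qed

lemma tan_integral_bound: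
  assumes t1: "t1 \<in> {0..T0}" and t2: "t2 \<in> {0..T0}"
  shows "(\<lambda>t. norm (x t) powr \<alpha> * tan (axis_angle (v t))) integrable_on {t1..t2} \<and>
         integral {t1..t2} (\<lambda>t. norm (x t) powr \<alpha> * tan (axis_angle (v t))) \<le> cone_tan_integral_bound \<alpha> \<gamma> \<beta>"
proof
  define f where "f t = rate t * tan (axis_angle (v t))" for t
  have sub: "{t1..t2} \<subseteq> {0..T0}"
    using t1 t2 by auto
  have int: "f integrable_on {t1..t2}"
    unfolding f_def rate_def by (rule integrable_continuous_interval[OF integrand_continuous[OF sub]])
  then show "(\<lambda>t. norm (x t) powr \<alpha> * tan (axis_angle (v t))) integrable_on {t1..t2}"
    unfolding f_def rate_def .
  have "integral {t1..t2} f \<le> cone_tan_integral_bound \<alpha> \<gamma> \<beta>"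
  proof (cases "t1 \<le> t2")
    case False
    then show ?thesis
      unfolding cone_tan_integral_bound_def using \<alpha> \<beta> \<gamma> by simp
  next
    case True
    define \<epsilon> where "\<epsilon> = 1 / (r0 powr \<alpha> * T0 + 1)" \<comment> \<open>keeps the error term \<open>r0\<^sup>\<alpha> \<epsilon> T0\<close> below 1\<close>
    have "0 \<le> r0 powr \<alpha> * T0"
      using T0 by simp
    then have \<epsilon>: "0 < \<epsilon>" "\<epsilon> \<le> 1" "r0 powr \<alpha> * \<epsilon> * T0 \<le> 1"
      unfolding \<epsilon>_def by (simp_all add: field_simps)
    have "\<forall>t\<in>{0..T0}. \<exists>D. (lyapunov \<epsilon> has_real_derivative D) (at t within {0..T0}) \<and>
                         f t \<le> r0 powr \<alpha> * \<epsilon> - D"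
      unfolding f_def using lyapunov_deriv_bound[OF \<open>0 < \<epsilon>\<close>] by blast
    then obtain D where D: "\<forall>t\<in>{0..T0}. (lyapunov \<epsilon> has_real_derivative D t) (at t within {0..T0}) \<and>
                                          f t \<le> r0 powr \<alpha> * \<epsilon> - D t"
      by (metis bchoice)
    have "integral {t1..t2} f \<le> lyapunov \<epsilon> t1 - lyapunov \<epsilon> t2 + r0 powr \<alpha> * \<epsilon> * (t2 - t1)"
    proof (rule integral_le_of_derivative_bound[OF True _ int])
      show "\<forall>t\<in>{t1..t2}. (lyapunov \<epsilon> has_real_derivative D t) (at t within {t1..t2})"
        using D sub by (blast intro: DERIV_subset)
      show "\<forall>t\<in>{t1..t2}. f t \<le> r0 powr \<alpha> * \<epsilon> - D t"
        using D sub by blast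
    qed
    moreover have "r0 powr \<alpha> * \<epsilon> * (t2 - t1) \<le> 1"
      using \<epsilon>(3) mult_left_mono[of "t2 - t1" T0 "r0 powr \<alpha> * \<epsilon>"] t1 t2 \<epsilon>(1) by simp
    ultimately show ?thesis
      using lyapunov_oscillation[OF \<epsilon>(1,2) t1, of t2]
      unfolding cone_tan_integral_bound_def tilt_weight_def by linarith
  qed
  then show "integral {t1..t2} (\<lambda>t. norm (x t) powr \<alpha> * tan (axis_angle (v t))) \<le> cone_tan_integral_bound \<alpha> \<gamma> \<beta>"
    unfolding f_def rate_def .
qed

end

theorem corollary7p9:
  fixes \<alpha> \<gamma> \<beta> r0 :: real
  assumes "0 < \<alpha>" "\<alpha> < 1" "0 < \<gamma>" "0 < \<beta>" "0 < r0"
  shows "\<exists>Q0::real. \<forall>(x :: real \<Rightarrow> real \<times> (real^'n)) (v :: real \<Rightarrow> real \<times> (real^'n)) T0 t1 t2.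
    (0 < T0 \<and>
     (\<forall>t\<in>{0..T0}. (x has_vector_derivative VF \<alpha> \<gamma> \<beta> (x t)) (at t within {0..T0})) \<and>
     norm (x 0) = r0 \<and> norm (x T0) = r0 \<and> (\<forall>t\<in>{0<..<T0}. norm (x t) < r0) \<and>
     (\<forall>t\<in>{0..T0}. \<exists>L. (VF \<alpha> \<gamma> \<beta> has_derivative L) (at (x t)) \<and>
                        (v has_vector_derivative L (v t)) (at t within {0..T0})) \<and>
     v 0 \<noteq> 0 \<and> fst (v 0) \<noteq> 0 \<and> tan (axis_angle (v 0)) \<le> \<alpha> / 2 \<and>
     t1 \<in> {0..T0} \<and> t2 \<in> {0..T0})
    \<longrightarrow> ((\<lambda>t. norm (x t) powr \<alpha> * tan (axis_angle (v t))) integrable_on {t1..t2} \<and>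
         integral {t1..t2} (\<lambda>t. norm (x t) powr \<alpha> * tan (axis_angle (v t))) \<le> Q0)"
proof (intro exI[of _ "cone_tan_integral_bound \<alpha> \<gamma> \<beta>"] allI impI, elim conjE)
  fix x v :: "real \<Rightarrow> real \<times> (real^'n)" and T0 t1 t2 :: real
  assume "0 < T0" "\<forall>t\<in>{0..T0}. (x has_vector_derivative VF \<alpha> \<gamma> \<beta> (x t)) (at t within {0..T0})"
    "norm (x 0) = r0" "norm (x T0) = r0" "\<forall>t\<in>{0<..<T0}. norm (x t) < r0"
    "\<forall>t\<in>{0..T0}. \<exists>L. (VF \<alpha> \<gamma> \<beta> has_derivative L) (at (x t)) \<and>
                        (v has_vector_derivative L (v t)) (at t within {0..T0})"
    "fst (v 0) \<noteq> 0" "tan (axis_angle (v 0)) \<le> \<alpha> / 2"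
    and t: "t1 \<in> {0..T0}" "t2 \<in> {0..T0}"
  then interpret cone_trajectory \<alpha> \<gamma> \<beta> r0 T0 x v
    using assms by unfold_locales auto
  show "(\<lambda>t. norm (x t) powr \<alpha> * tan (axis_angle (v t))) integrable_on {t1..t2} \<and>
        integral {t1..t2} (\<lambda>t. norm (x t) powr \<alpha> * tan (axis_angle (v t))) \<le> cone_tan_integral_bound \<alpha> \<gamma> \<beta>"
    by (rule tan_integral_bound[OF t])
qed

end
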